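(* Let $A$ be a Heyting algebra, and let $\mathcal{L}=(Expr_{\mathcal{L}},Th_{\mathcal{L}},\mathcal{C})$ with $Expr_{\mathcal{L}}=A$, $Th_{\mathcal{L}}$ the set of proper filters of $A$, and $\mathcal{C}=\{\wedge,\vee,\to,\bot,\top\}$ the Heyting operations of $A$. Then $\mathcal{L}$ is an intuitionistic abstract logic.
   Context: An abstract logic is a triple $\mathcal{L}=(Expr_{\mathcal{L}},Th_{\mathcal{L}},\mathcal{C}_{\mathcal{L}})$ where $Expr_{\mathcal{L}}$ is a set, $Th_{\mathcal{L}}$ a non-empty set of subsets of $Expr_{\mathcal{L}}$ (theories) closed under intersections of non-empty subfamilies, and $\mathcal{C}_{\mathcal{L}}$ a set of operations on $Expr_{\mathcal{L}}$. $\mathcal{L}$ is closed under union of chains if the union of every non-empty chain of theories is a theory. A theory $T$ is totally prime if $T=\bigcap\mathcal{T}$ for a non-empty $\mathcal{T}\subseteq Th_{\mathcal{L}}$ (any size) implies $T\in\mathcal{T}$; $TPTh_{\mathcal{L}}$ is the set of these. An intuitionistic abstract logic is one closed under union of chains with binary connectives $\vee,\wedge,\to$ and constants $\top,\bot$ such that for all $a,b$ and all $T\in TPTh_{\mathcal{L}}$: $a\vee b\in T$ iff $a\in T$ or $b\in T$; $a\wedge b\in T$ iff $a,b\in T$; $a\to b\in T$ iff for every totally prime $T'\supseteq T$, $a\in T'$ implies $b\in T'$; $\top$ lies in every theory and $\bot$ in none. *)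

theory Defs
  imports Main
begin

class heyting_algebra = bounded_lattice +
  fixes himp :: "'a \<Rightarrow> 'a \<Rightarrow> 'a"
  assumes himp_residuation: "inf x a \<le> b \<longleftrightarrow> x \<le> himp a b"

definition lattice_filter :: "'a::bounded_lattice set \<Rightarrow> bool" where
  "lattice_filter F \<longleftrightarrow> top \<in> F
     \<and> (\<forall>x y. x \<in> F \<and> x \<le> y \<longrightarrow> y \<in> F)
     \<and> (\<forall>x y. x \<in> F \<and> y \<in> F \<longrightarrow> inf x y \<in> F)"

definition proper_filter :: "'a::bounded_lattice set \<Rightarrow> bool" where
  "proper_filter F \<longleftrightarrow> lattice_filter F \<and> F \<noteq> UNIV"

text \<open>The set of operations of the abstract logic is given by the concrete
  connectives; an abstract logic only requires they be operations on Expr.\<close>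

definition abstract_logic :: "'e set \<Rightarrow> 'e set set \<Rightarrow> bool" where
  "abstract_logic Expr Th \<longleftrightarrow> Th \<noteq> {} \<and> (\<forall>T\<in>Th. T \<subseteq> Expr)
     \<and> (\<forall>\<T>. \<T> \<noteq> {} \<and> \<T> \<subseteq> Th \<longrightarrow> \<Inter>\<T> \<in> Th)"

definition closed_under_union_of_chains :: "'e set set \<Rightarrow> bool" where
  "closed_under_union_of_chains Th \<longleftrightarrow>
     (\<forall>\<C>. \<C> \<noteq> {} \<and> \<C> \<subseteq> Th \<and> chain\<^sub>\<subseteq> \<C> \<longrightarrow> \<Union>\<C> \<in> Th)"

definition totally_prime :: "'e set set \<Rightarrow> 'e set \<Rightarrow> bool" where
  "totally_prime Th T \<longleftrightarrow> T \<in> Th \<and>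
     (\<forall>\<T>. \<T> \<noteq> {} \<and> \<T> \<subseteq> Th \<and> T = \<Inter>\<T> \<longrightarrow> T \<in> \<T>)"

definition TPTh :: "'e set set \<Rightarrow> 'e set set" where
  "TPTh Th = {T. totally_prime Th T}"

definition intuitionistic_abstract_logic ::
  "'e set \<Rightarrow> 'e set set \<Rightarrow> ('e \<Rightarrow> 'e \<Rightarrow> 'e) \<Rightarrow> ('e \<Rightarrow> 'e \<Rightarrow> 'e)
     \<Rightarrow> ('e \<Rightarrow> 'e \<Rightarrow> 'e) \<Rightarrow> 'e \<Rightarrow> 'e \<Rightarrow> bool" where
  "intuitionistic_abstract_logic Expr Th dsj cnj imp tp bt \<longleftrightarrow>
     abstract_logic Expr Th
     \<and> closed_under_union_of_chains Th
     \<and> (\<forall>a\<in>Expr. \<forall>b\<in>Expr. dsj a b \<in> Expr \<and> cnj a b \<in> Expr \<and> imp a b \<in> Expr)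
     \<and> tp \<in> Expr \<and> bt \<in> Expr
     \<and> (\<forall>a\<in>Expr. \<forall>b\<in>Expr. \<forall>T\<in>TPTh Th.
          (dsj a b \<in> T \<longleftrightarrow> a \<in> T \<or> b \<in> T)
        \<and> (cnj a b \<in> T \<longleftrightarrow> a \<in> T \<and> b \<in> T)
        \<and> (imp a b \<in> T \<longleftrightarrow> (\<forall>T'\<in>TPTh Th. T \<subseteq> T' \<longrightarrow> a \<in> T' \<longrightarrow> b \<in> T')))
     \<and> (\<forall>T\<in>Th. tp \<in> T \<and> bt \<notin> T)"

end

theory Submission
  imports Defs
begin

text \<open>The set \<open>{x. a \<Rightarrow> x \<in> F}\<close> is the filter generated by \<open>F\<close> and \<open>a\<close>. If \<open>a \<squnion> b \<in> F\<close>,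
  then \<open>F\<close> is the intersection of the filters generated by \<open>F, a\<close> and by \<open>F, b\<close>, so a totally
  prime filter is prime. By Zorn's lemma every filter avoiding \<open>b\<close> extends to a maximal such
  filter, and maximality makes it totally prime. Applied to the filter generated by \<open>T\<close> and
  \<open>a\<close> when \<open>a \<Rightarrow> b \<notin> T\<close>, this gives the totally prime extension of \<open>T\<close> containing \<open>a\<close> but
  not \<open>b\<close> that the clause for implication requires.\<close>

context heyting_algebra
begin

lemma inf_himp_le: "inf a (himp a b) \<le> b"
  using himp_residuation[of "himp a b" a b] by (simp add: inf_commute)

lemma le_himp: "b \<le> himp a b"
  using himp_residuation[of b a b] by simp

lemma himp_self: "himp a a = top"
  using himp_residuation[of top a a] by (simp add: top_unique)

lemma himp_mono: "x \<le> y \<Longrightarrow> himp a x \<le> himp a y"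
  using himp_residuation[of "himp a x" a y] inf_himp_le[of a x]
  by (metis inf_commute order_trans)

lemma inf_himp_le_himp_inf: "inf (himp a x) (himp a y) \<le> himp a (inf x y)"
proof -
  have "inf (inf (himp a x) (himp a y)) a \<le> x"
    by (metis inf_himp_le inf_commute inf_le1 inf_mono order_refl order_trans)
  moreover have "inf (inf (himp a x) (himp a y)) a \<le> y"
    by (metis inf_himp_le inf_commute inf_le2 inf_mono order_refl order_trans)
  ultimately have "inf (inf (himp a x) (himp a y)) a \<le> inf x y" by simp
  then show ?thesis using himp_residuation by blast
qed

lemma inf_himp_le_himp_sup: "inf (himp a x) (himp b x) \<le> himp (sup a b) x"
proof -
  let ?y = "inf (himp a x) (himp b x)"
  have "inf a ?y \<le> x" "inf b ?y \<le> x"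
    by (metis inf_himp_le inf_le1 inf_le2 inf_mono order_refl order_trans)+
  then have "sup a b \<le> himp ?y x" using himp_residuation by simp
  then have "inf ?y (sup a b) \<le> x" using himp_residuation by (simp add: inf_commute)
  then show ?thesis using himp_residuation by blast
qed

end

lemma lattice_filter_top: "lattice_filter F \<Longrightarrow> top \<in> F"
  unfolding lattice_filter_def by auto

lemma lattice_filter_upward: "lattice_filter F \<Longrightarrow> x \<in> F \<Longrightarrow> x \<le> y \<Longrightarrow> y \<in> F"
  unfolding lattice_filter_def by auto

lemma lattice_filter_inf: "lattice_filter F \<Longrightarrow> x \<in> F \<Longrightarrow> y \<in> F \<Longrightarrow> inf x y \<in> F"
  unfolding lattice_filter_def by auto

lemma lattice_filter_inf_iff: "lattice_filter F \<Longrightarrow> inf x y \<in> F \<longleftrightarrow> x \<in> F \<and> y \<in> F"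
  by (meson inf_le1 inf_le2 lattice_filter_inf lattice_filter_upward)

lemma proper_filter_iff_bot_notin:
  "proper_filter (F::'a::bounded_lattice set) \<longleftrightarrow> lattice_filter F \<and> bot \<notin> F"
  unfolding proper_filter_def lattice_filter_def by (auto intro: bot_least)

lemma lattice_filter_Inter:
  "\<forall>F\<in>\<F>. lattice_filter F \<Longrightarrow> lattice_filter (\<Inter>\<F>)"
  unfolding lattice_filter_def by blast

lemma lattice_filter_Union_chain:
  assumes "\<C> \<noteq> {}" and "chain\<^sub>\<subseteq> \<C>" and "\<forall>F\<in>\<C>. lattice_filter F"
  shows "lattice_filter (\<Union>\<C>)"
  unfolding lattice_filter_def
proof (intro conjI allI impI)
  show "top \<in> \<Union>\<C>" using assms(1,3) lattice_filter_top by blast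
  fix x y
  show "x \<in> \<Union>\<C> \<and> x \<le> y \<Longrightarrow> y \<in> \<Union>\<C>" using assms(3) lattice_filter_upward by blast
  assume "x \<in> \<Union>\<C> \<and> y \<in> \<Union>\<C>"
  then obtain X Y where "X \<in> \<C>" "Y \<in> \<C>" "x \<in> X" "y \<in> Y" by auto
  with assms(2,3) show "inf x y \<in> \<Union>\<C>"
    unfolding chain_subset_def by (metis UnionI lattice_filter_inf subsetD)
qed

definition filter_adjoin :: "'a::heyting_algebra \<Rightarrow> 'a set \<Rightarrow> 'a set" where
  "filter_adjoin a F = {x. himp a x \<in> F}"

lemma lattice_filter_adjoin:
  assumes "lattice_filter F"
  shows "lattice_filter (filter_adjoin a F)"
  unfolding lattice_filter_def filter_adjoin_def
proof (intro conjI allI impI; simp)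
  show "himp a top \<in> F"
    using lattice_filter_top[OF assms] le_himp[of top a] by (simp add: top_unique)
  fix x y
  show "himp a x \<in> F \<and> x \<le> y \<Longrightarrow> himp a y \<in> F"
    using lattice_filter_upward[OF assms] himp_mono by blast
  show "himp a x \<in> F \<and> himp a y \<in> F \<Longrightarrow> himp a (inf x y) \<in> F"
    using lattice_filter_upward[OF assms] lattice_filter_inf[OF assms] inf_himp_le_himp_inf
    by blast
qed

lemma subset_filter_adjoin: "lattice_filter F \<Longrightarrow> F \<subseteq> filter_adjoin a F"
  unfolding filter_adjoin_def using lattice_filter_upward le_himp by blast

lemma mem_filter_adjoin: "lattice_filter F \<Longrightarrow> a \<in> filter_adjoin a F"
  unfolding filter_adjoin_def by (simp add: himp_self lattice_filter_top)

lemma filter_adjoin_sup_Int: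
  assumes F: "lattice_filter F" and ab: "sup a b \<in> F"
  shows "filter_adjoin a F \<inter> filter_adjoin b F = F"
proof
  show "filter_adjoin a F \<inter> filter_adjoin b F \<subseteq> F"
  proof
    fix x assume "x \<in> filter_adjoin a F \<inter> filter_adjoin b F"
    then have "himp (sup a b) x \<in> F"
      unfolding filter_adjoin_def
      using lattice_filter_inf[OF F] lattice_filter_upward[OF F] inf_himp_le_himp_sup by blast
    then have "inf (sup a b) (himp (sup a b) x) \<in> F" using lattice_filter_inf[OF F] ab by blast
    then show "x \<in> F" using lattice_filter_upward[OF F] inf_himp_le by blast
  qed
  show "F \<subseteq> filter_adjoin a F \<inter> filter_adjoin b F" using subset_filter_adjoin[OF F] by blast
qed

lemma totally_prime_imp_lattice_filter:
  "totally_prime {F. proper_filter F} T \<Longrightarrow> lattice_filter T"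
  unfolding totally_prime_def proper_filter_def by auto

lemma totally_prime_filter_Int:
  fixes T :: "'a::bounded_lattice set"
  assumes T: "totally_prime {F. proper_filter F} T"
    and "lattice_filter S1" "lattice_filter S2" and T_eq: "T = S1 \<inter> S2"
  shows "T = S1 \<or> T = S2"
proof -
  \<comment> \<open>\<open>UNIV\<close> is a filter but not a proper one, so it must be dropped from the family\<close>
  define \<T> where "\<T> = {S1, S2} - {UNIV}"
  have "T \<noteq> UNIV" using T unfolding totally_prime_def proper_filter_def by auto
  then have "\<T> \<noteq> {}" "T = \<Inter>\<T>" using T_eq unfolding \<T>_def by auto
  moreover have "\<T> \<subseteq> {F. proper_filter F}"
    unfolding \<T>_def proper_filter_def using assms(2,3) by auto
  ultimately have "T \<in> \<T>" using T unfolding totally_prime_def by blast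
  then show ?thesis unfolding \<T>_def by auto
qed

lemma totally_prime_filter_sup_iff:
  fixes T :: "'a::heyting_algebra set"
  assumes T: "totally_prime {F. proper_filter F} T"
  shows "sup a b \<in> T \<longleftrightarrow> a \<in> T \<or> b \<in> T"
proof
  have F: "lattice_filter T" using totally_prime_imp_lattice_filter[OF T] .
  assume "sup a b \<in> T"
  then have "T = filter_adjoin a T \<inter> filter_adjoin b T"
    using filter_adjoin_sup_Int[OF F] by simp
  then have "T = filter_adjoin a T \<or> T = filter_adjoin b T"
    using totally_prime_filter_Int[OF T lattice_filter_adjoin[OF F] lattice_filter_adjoin[OF F]]
    by simp
  then show "a \<in> T \<or> b \<in> T" using mem_filter_adjoin[OF F, of a] mem_filter_adjoin[OF F, of b]
    by auto
next
  show "a \<in> T \<or> b \<in> T \<Longrightarrow> sup a b \<in> T"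
    using lattice_filter_upward[OF totally_prime_imp_lattice_filter[OF T]] by (meson sup_ge1 sup_ge2)
qed

lemma maximal_filter_avoiding_totally_prime:
  fixes M :: "'a::bounded_lattice set"
  assumes M: "lattice_filter M" "b \<notin> M"
    and maximal: "\<And>F. lattice_filter F \<Longrightarrow> b \<notin> F \<Longrightarrow> M \<subseteq> F \<Longrightarrow> F = M"
  shows "totally_prime {F. proper_filter F} M"
  unfolding totally_prime_def
proof (intro conjI allI impI)
  show "M \<in> {F. proper_filter F}" using M unfolding proper_filter_def by auto
  fix \<T> assume \<T>: "\<T> \<noteq> {} \<and> \<T> \<subseteq> {F. proper_filter F} \<and> M = \<Inter>\<T>"
  show "M \<in> \<T>"
  proof (rule ccontr)
    assume "M \<notin> \<T>"
    have "b \<in> F" if "F \<in> \<T>" for F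
    proof (rule ccontr)
      assume "b \<notin> F"
      moreover have "lattice_filter F" using \<T> that unfolding proper_filter_def by auto
      moreover have "M \<subseteq> F" using \<T> that by auto
      ultimately have "F = M" using maximal by blast
      with \<open>M \<notin> \<T>\<close> that show False by simp
    qed
    then show False using \<T> M(2) by auto
  qed
qed

lemma filter_extends_to_totally_prime:
  fixes G :: "'a::bounded_lattice set"
  assumes G: "lattice_filter G" and b: "b \<notin> G"
  obtains M where "totally_prime {F. proper_filter F} M" "G \<subseteq> M" "b \<notin> M"
proof -
  define A where "A = {F. lattice_filter F \<and> G \<subseteq> F \<and> b \<notin> F}"
  have "\<exists>M\<in>A. \<forall>F\<in>A. M \<subseteq> F \<longrightarrow> F = M"
  proof (rule subset_Zorn_nonempty)
    show "A \<noteq> {}" using G b unfolding A_def by auto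
    fix \<C> assume "\<C> \<noteq> {}" and "subset.chain A \<C>"
    then have "\<C> \<subseteq> A" "chain\<^sub>\<subseteq> \<C>" unfolding subset_chain_def chain_subset_def by auto
    with \<open>\<C> \<noteq> {}\<close> have "lattice_filter (\<Union>\<C>)"
      using lattice_filter_Union_chain unfolding A_def by blast
    with \<open>\<C> \<noteq> {}\<close> \<open>\<C> \<subseteq> A\<close> show "\<Union>\<C> \<in> A" unfolding A_def by blast
  qed
  then obtain M where M: "M \<in> A" and maximal: "\<forall>F\<in>A. M \<subseteq> F \<longrightarrow> F = M" by blast
  have "totally_prime {F. proper_filter F} M"
  proof (rule maximal_filter_avoiding_totally_prime)
    show "lattice_filter M" "b \<notin> M" using M unfolding A_def by auto
    fix F assume "lattice_filter F" "b \<notin> F" "M \<subseteq> F"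
    with M maximal show "F = M" unfolding A_def by blast
  qed
  with M show thesis using that unfolding A_def by blast
qed

lemma totally_prime_filter_himp_iff:
  fixes T :: "'a::heyting_algebra set"
  assumes T: "totally_prime {F. proper_filter F} T"
  shows "himp a b \<in> T \<longleftrightarrow>
    (\<forall>T'\<in>TPTh {F. proper_filter F}. T \<subseteq> T' \<longrightarrow> a \<in> T' \<longrightarrow> b \<in> T')"
proof
  assume "himp a b \<in> T"
  show "\<forall>T'\<in>TPTh {F. proper_filter F}. T \<subseteq> T' \<longrightarrow> a \<in> T' \<longrightarrow> b \<in> T'"
  proof (intro ballI impI)
    fix T' assume "T' \<in> TPTh {F. proper_filter F}" "T \<subseteq> T'" "a \<in> T'"
    then have F': "lattice_filter T'"
      using totally_prime_imp_lattice_filter unfolding TPTh_def by simp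
    have "inf a (himp a b) \<in> T'"
      using lattice_filter_inf[OF F'] \<open>a \<in> T'\<close> \<open>himp a b \<in> T\<close> \<open>T \<subseteq> T'\<close> by blast
    then show "b \<in> T'" using lattice_filter_upward[OF F'] inf_himp_le by blast
  qed
next
  have F: "lattice_filter T" using totally_prime_imp_lattice_filter[OF T] .
  assume extensions: "\<forall>T'\<in>TPTh {F. proper_filter F}. T \<subseteq> T' \<longrightarrow> a \<in> T' \<longrightarrow> b \<in> T'"
  show "himp a b \<in> T"
  proof (rule ccontr)
    assume "himp a b \<notin> T"
    then have "b \<notin> filter_adjoin a T" unfolding filter_adjoin_def by simp
    then obtain M where "totally_prime {F. proper_filter F} M" "filter_adjoin a T \<subseteq> M" "b \<notin> M"
      using filter_extends_to_totally_prime[OF lattice_filter_adjoin[OF F]] by blast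
    moreover have "T \<subseteq> filter_adjoin a T" "a \<in> filter_adjoin a T"
      using subset_filter_adjoin[OF F] mem_filter_adjoin[OF F] .
    ultimately have "M \<in> TPTh {F. proper_filter F}" "T \<subseteq> M" "a \<in> M" "b \<notin> M"
      by (auto simp: TPTh_def)
    then show False using extensions by blast
  qed
qed

lemma abstract_logic_proper_filters:
  assumes "(bot::'a::bounded_lattice) \<noteq> top"
  shows "abstract_logic (UNIV::'a set) {F. proper_filter F}"
  unfolding abstract_logic_def
proof (intro conjI allI impI)
  have "proper_filter {top::'a}"
    unfolding proper_filter_iff_bot_notin lattice_filter_def using assms
    by (auto simp: top_unique)
  then show "{F::'a set. proper_filter F} \<noteq> {}" by auto
  fix \<T> :: "'a set set" assume "\<T> \<noteq> {} \<and> \<T> \<subseteq> {F. proper_filter F}"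
  then show "\<Inter>\<T> \<in> {F. proper_filter F}"
    using lattice_filter_Inter[of \<T>] unfolding proper_filter_iff_bot_notin by auto
qed simp

lemma closed_under_union_of_chains_proper_filters:
  "closed_under_union_of_chains {F::'a::bounded_lattice set. proper_filter F}"
  unfolding closed_under_union_of_chains_def proper_filter_iff_bot_notin
proof (intro allI impI)
  fix \<C> :: "'a set set"
  assume "\<C> \<noteq> {} \<and> \<C> \<subseteq> {F. lattice_filter F \<and> bot \<notin> F} \<and> chain\<^sub>\<subseteq> \<C>"
  then have "\<C> \<noteq> {}" "chain\<^sub>\<subseteq> \<C>" "\<forall>F\<in>\<C>. lattice_filter F" "\<forall>F\<in>\<C>. bot \<notin> F"
    by auto
  then show "\<Union>\<C> \<in> {F. lattice_filter F \<and> bot \<notin> F}"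
    by (simp add: lattice_filter_Union_chain)
qed

theorem lemma4p4:
  assumes "(bot::'a::heyting_algebra) \<noteq> top"
  shows "intuitionistic_abstract_logic (UNIV::'a set) {F. proper_filter F}
           sup inf himp top bot"
proof -
  have "(sup a b \<in> T \<longleftrightarrow> a \<in> T \<or> b \<in> T)
        \<and> (inf a b \<in> T \<longleftrightarrow> a \<in> T \<and> b \<in> T)
        \<and> (himp a b \<in> T \<longleftrightarrow> (\<forall>T'\<in>TPTh {F. proper_filter F}. T \<subseteq> T' \<longrightarrow> a \<in> T' \<longrightarrow> b \<in> T'))"
    if "T \<in> TPTh {F::'a set. proper_filter F}" for a b :: 'a and T
  proof -
    have T: "totally_prime {F. proper_filter F} T" using that by (simp add: TPTh_def)
    show ?thesis
      using totally_prime_filter_sup_iff[OF T] totally_prime_filter_himp_iff[OF T]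
        lattice_filter_inf_iff[OF totally_prime_imp_lattice_filter[OF T]]
      by simp
  qed
  moreover have "\<forall>T\<in>{F::'a set. proper_filter F}. top \<in> T \<and> bot \<notin> T"
    by (simp add: proper_filter_iff_bot_notin lattice_filter_top)
  ultimately show ?thesis
    unfolding intuitionistic_abstract_logic_def
    using abstract_logic_proper_filters[OF assms] closed_under_union_of_chains_proper_filters
    by simp
qed

end
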